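(* Let $0\le b\le1$, $M>0$ and $0\le\alpha<1$, and let $r_0=r_0(\alpha)$ be the real root in $(0,1)$ of the equation \[M(1-\alpha+\alpha r)=\big((1+M)(1-\alpha)-(2-\alpha)(2b-M)r\big)(1-r)^2.\] Let $\mathcal{F}$ be the class of functions $f\in\mathcal{A}_b$, $f(z)=z+\sum_{n\ge2}a_nz^n$, with $|a_n|\le M$ for all $n\ge3$. Then: (i) every $f\in\mathcal{F}$ satisfies $\left|\frac{zf'(z)}{f(z)}-1\right|\le1-\alpha$ for $|z|\le r_0$; (ii) $r_0(\alpha)$ is the radius of starlikeness of order $\alpha$ of $\mathcal{F}$; (iii) $r_0(1/2)$ is the radius of parabolic starlikeness of $\mathcal{F}$. All results are sharp: the function $f_0(z)=z-2bz^2-\frac{Mz^3}{1-z}=z-2bz^2-M\sum_{n\ge3}z^n$ belongs to $\mathcal{F}$ and satisfies $\left|\frac{zf_0'(z)}{f_0(z)}-1\right|=1-\alpha$ and $\operatorname{Re}\frac{zf_0'(z)}{f_0(z)}=\alpha$ at $z=r_0$.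
   Context: $\mathbb{D}=\{z\in\mathbb{C}:|z|<1\}$. For $0\le b\le1$, $\mathcal{A}_b$ is the class of analytic functions $f$ on $\mathbb{D}$ of the form $f(z)=z+a_2z^2+a_3z^3+\cdots$ with $|a_2|=2b$. For a class $\mathcal{F}$ of analytic functions on $\mathbb{D}$ normalized by $f(0)=0$, $f'(0)=1$, and $0\le\alpha<1$, the radius of starlikeness of order $\alpha$ of $\mathcal{F}$ is the supremum of $r\in(0,1]$ such that every $f\in\mathcal{F}$ satisfies $f(z)\ne0$ for $0<|z|<r$ and $\operatorname{Re}\big(zf'(z)/f(z)\big)>\alpha$ for $|z|<r$ (the quotient being $1$ at $z=0$). The radius of parabolic starlikeness of $\mathcal{F}$ is the supremum of $r\in(0,1]$ such that every $f\in\mathcal{F}$ satisfies $\operatorname{Re}\big(zf'(z)/f(z)\big)>\left|zf'(z)/f(z)-1\right|$ for $|z|<r$. *)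

theory Defs
  imports "HOL-Analysis.Analysis"
begin

definition coeff0 :: "(complex \<Rightarrow> complex) \<Rightarrow> nat \<Rightarrow> complex" where
  "coeff0 f n = (deriv ^^ n) f 0 / of_nat (fact n)"

definition normalized_analytic :: "(complex \<Rightarrow> complex) set" where
  "normalized_analytic = {f. f holomorphic_on ball 0 1 \<and> f 0 = 0 \<and> deriv f 0 = 1}"

definition class_A :: "real \<Rightarrow> (complex \<Rightarrow> complex) set" where
  "class_A b = {f \<in> normalized_analytic. cmod (coeff0 f 2) = 2 * b}"

definition sq :: "(complex \<Rightarrow> complex) \<Rightarrow> complex \<Rightarrow> complex" where
  "sq f z = (if z = 0 then 1 else z * deriv f z / f z)"

definition radius_starlike_order :: "real \<Rightarrow> (complex \<Rightarrow> complex) set \<Rightarrow> real" where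
  "radius_starlike_order \<alpha> F = Sup {r \<in> {0<..1}. \<forall>f\<in>F.
      (\<forall>z. 0 < cmod z \<and> cmod z < r \<longrightarrow> f z \<noteq> 0) \<and>
      (\<forall>z. cmod z < r \<longrightarrow> Re (sq f z) > \<alpha>)}"

definition radius_parabolic :: "(complex \<Rightarrow> complex) set \<Rightarrow> real" where
  "radius_parabolic F = Sup {r \<in> {0<..1}. \<forall>f\<in>F.
      (\<forall>z. cmod z < r \<longrightarrow> Re (sq f z) > cmod (sq f z - 1))}"

end

theory Submission
  imports Defs "HOL-Complex_Analysis.Complex_Analysis"
begin

text \<open>For \<open>f\<close> in the class and \<open>|z| = r\<close>, comparing Taylor coefficients with those of the
  extremal function \<open>f\<^sub>0\<close> gives \<open>|f z - z| \<le> r - f\<^sub>0 r\<close> and \<open>|z f' z - f z| \<le> f\<^sub>0 r - r f\<^sub>0' r\<close>,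
  hence \<open>|z f'/f - 1| \<le> N(r)/(r - D(r))\<close> with explicit rational functions \<open>D\<close>, \<open>N\<close>.
  Clearing denominators, \<open>N(r)/(r - D(r)) \<le> 1 - \<alpha>\<close> becomes \<open>g(r) \<ge> 0\<close> for the function \<open>g\<close>
  whose root defines \<open>r\<^sub>0\<close>, and \<open>g\<close> is strictly decreasing wherever it is nonnegative on \<open>(0,1)\<close>.
  At \<open>z = r\<^sub>0\<close> all estimates are equalities for \<open>f\<^sub>0\<close>, which makes every bound sharp.\<close>

definition coeff_bounded_class :: "real \<Rightarrow> real \<Rightarrow> (complex \<Rightarrow> complex) set" where
  "coeff_bounded_class b M = {f \<in> class_A b. \<forall>n\<ge>3. cmod (coeff0 f n) \<le> M}"

lemma coeff_bounded_classD:
  assumes "f \<in> coeff_bounded_class b M"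
  shows "f holomorphic_on ball 0 1" "coeff0 f 0 = 0" "coeff0 f 1 = 1"
    "cmod (coeff0 f 2) = 2 * b" "\<And>n. n \<ge> 3 \<Longrightarrow> cmod (coeff0 f n) \<le> M"
  using assms
  by (auto simp: coeff_bounded_class_def class_A_def normalized_analytic_def coeff0_def)

lemma sums_coeff0:
  assumes "f holomorphic_on ball 0 1" "norm z < 1"
  shows "(\<lambda>n. coeff0 f n * z^n) sums f z"
  using holomorphic_power_series[OF assms(1), of z] assms(2) by (simp add: coeff0_def)

lemma sums_coeff0_deriv:
  assumes "f holomorphic_on ball 0 1" "norm z < 1"
  shows "(\<lambda>n. of_nat (Suc n) * coeff0 f (Suc n) * z^n) sums deriv f z"
proof -
  have "deriv f holomorphic_on ball 0 1"
    using assms(1) by (intro holomorphic_deriv) auto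
  from holomorphic_power_series[OF this, of z] assms(2)
  have "(\<lambda>n. (deriv ^^ n) (deriv f) 0 / fact n * z^n) sums deriv f z" by simp
  moreover have "(deriv ^^ n) (deriv f) 0 / fact n = of_nat (Suc n) * coeff0 f (Suc n)" for n
  proof -
    have "(deriv ^^ Suc n) f = (deriv ^^ n) (deriv f)" by (simp only: funpow_Suc_right comp_def)
    moreover have "(of_nat (Suc n) :: complex) \<noteq> 0" by (simp only: of_nat_eq_0_iff)
    ultimately show ?thesis
      unfolding coeff0_def by (simp only: fact_Suc of_nat_mult) (simp add: field_simps del: of_nat_Suc)
  qed
  ultimately show ?thesis by simp
qed

lemma sums_coeff0_zderiv_minus:
  assumes "f holomorphic_on ball 0 1" "norm z < 1"
  shows "(\<lambda>n. (of_nat n - 1) * coeff0 f n * z^n) sums (z * deriv f z - f z)"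
proof -
  have "(\<lambda>n. z * (of_nat (Suc n) * coeff0 f (Suc n) * z^n)) sums (z * deriv f z)"
    using sums_mult[OF sums_coeff0_deriv[OF assms]] by simp
  then have "(\<lambda>n. (\<lambda>m. of_nat m * coeff0 f m * z^m) (Suc n)) sums (z * deriv f z)"
    by (simp add: field_simps)
  then have "(\<lambda>m. of_nat m * coeff0 f m * z^m) sums (z * deriv f z)"
    by (subst (asm) sums_Suc_iff) simp
  from sums_diff[OF this sums_coeff0[OF assms]] show ?thesis
    by (simp add: algebra_simps)
qed

lemma norm_sums_le:
  fixes a :: "nat \<Rightarrow> 'a :: banach"
  assumes "a sums s" "m sums t" "\<And>n. norm (a n) \<le> m n"
  shows "norm s \<le> t"
proof -
  have "summable m" using assms(2) by (simp add: sums_summable)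
  moreover have "summable (\<lambda>n. norm (a n))"
    by (rule summable_comparison_test[OF _ \<open>summable m\<close>]) (use assms(3) in auto)
  ultimately have "norm (suminf a) \<le> suminf m"
    by (metis summable_norm suminf_le assms(3) order_trans)
  with assms(1,2) show ?thesis by (metis sums_unique)
qed

subsection \<open>The extremal function\<close>

definition extremal :: "real \<Rightarrow> real \<Rightarrow> complex \<Rightarrow> complex" where
  "extremal b M z = z - 2 * of_real b * z^2 - of_real M * z^3 / (1 - z)"

definition extremal_coeff :: "real \<Rightarrow> real \<Rightarrow> nat \<Rightarrow> real" where
  "extremal_coeff b M n = (if n = 0 then 0 else if n = 1 then 1 else if n = 2 then -2*b else -M)"

lemma extremal_has_fps_expansion:
  "extremal b M has_fps_expansion
     (fps_X - fps_const (2 * of_real b) * fps_X^2 - fps_const (of_real M) * fps_X^3 / (1 - fps_X))"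
  unfolding extremal_def[abs_def]
  by (intro has_fps_expansion_diff has_fps_expansion_cmult_left has_fps_expansion_divide'
       has_fps_expansion_fps_X has_fps_expansion_fps_X_power has_fps_expansion_1) auto

lemma coeff0_extremal: "coeff0 (extremal b M) n = of_real (extremal_coeff b M n)"
proof -
  have "inverse (1 - fps_X :: complex fps) = Abs_fps (\<lambda>n. 1)"
    by (metis fps_inverse_gp' fps_inverse_idempotent fps_nth_Abs_fps one_neq_zero)
  then have "fps_const (of_real M) * fps_X^3 / (1 - fps_X)
      = fps_const (of_real M) * (fps_X^3 * Abs_fps (\<lambda>n. 1 :: complex))"
    by (subst fps_divide_unit) (auto simp: mult.assoc)
  then show ?thesis
    using fps_nth_fps_expansion[OF extremal_has_fps_expansion[of b M], of n]
    by (auto simp: coeff0_def extremal_coeff_def fps_X_power_mult_nth)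
qed

lemma extremal_holomorphic: "extremal b M holomorphic_on ball 0 1"
proof -
  have "1 - z \<noteq> 0" if "z \<in> ball (0::complex) 1" for z
    using that by auto
  then show ?thesis unfolding extremal_def[abs_def] by (intro holomorphic_intros) auto
qed

lemma extremal_in_class:
  assumes "0 \<le> b" "0 \<le> M"
  shows "extremal b M \<in> coeff_bounded_class b M"
proof -
  have "deriv (extremal b M) 0 = 1"
    using coeff0_extremal[of b M 1] by (simp add: coeff0_def extremal_coeff_def)
  moreover have "extremal b M 0 = 0" by (simp add: extremal_def)
  ultimately show ?thesis
    using extremal_holomorphic assms
    by (auto simp: coeff_bounded_class_def class_A_def normalized_analytic_def coeff0_extremal
        extremal_coeff_def)
qed

text \<open>These are \<open>r - f\<^sub>0 r\<close> and \<open>f\<^sub>0 r - r f\<^sub>0' r\<close>, which is how the coefficient majorant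
  series below are summed.\<close>

definition bound_minus_id :: "real \<Rightarrow> real \<Rightarrow> real \<Rightarrow> real" where
  "bound_minus_id b M r = 2*b*r^2 + M*r^3/(1-r)"

definition bound_zderiv_minus :: "real \<Rightarrow> real \<Rightarrow> real \<Rightarrow> real" where
  "bound_zderiv_minus b M r = 2*b*r^2 + M*r^3*(2-r)/(1-r)^2"

lemma extremal_of_real:
  "r < 1 \<Longrightarrow> extremal b M (of_real r) = of_real (r - bound_minus_id b M r)"
  by (simp add: extremal_def bound_minus_id_def)

lemma extremal_zderiv_minus_of_real:
  assumes "r < 1"
  shows "of_real r * deriv (extremal b M) (of_real r) - extremal b M (of_real r)
       = - of_real (bound_zderiv_minus b M r)"
proof -
  have nz: "(1::complex) - of_real r \<noteq> 0"
    using assms by (metis of_real_1 of_real_eq_iff right_minus_eq less_irrefl)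
  have "(extremal b M has_field_derivative
      of_real (1 - 4 * b * r - M * (3 * r^2 * (1 - r) + r^3) / (1 - r)^2)) (at (of_real r))"
    unfolding extremal_def[abs_def]
    by (rule derivative_eq_intros | rule refl)+
       (use nz in \<open>simp_all add: field_simps power2_eq_square power3_eq_cube\<close>)
  moreover have "r * (1 - 4 * b * r - M * (3 * r^2 * (1 - r) + r^3) / (1 - r)^2)
      - (r - bound_minus_id b M r) = - bound_zderiv_minus b M r"
    using assms unfolding bound_minus_id_def bound_zderiv_minus_def
    by (simp add: field_simps) (simp add: algebra_simps power2_eq_square power3_eq_cube power4_eq_xxxx)
  ultimately show ?thesis
    using assms by (simp add: DERIV_imp_deriv extremal_of_real flip: of_real_mult of_real_diff)
qed

lemma sums_bound_minus_id:
  assumes "0 \<le> r" "r < 1"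
  shows "(\<lambda>n. (if n = 1 then r else 0) - extremal_coeff b M n * r^n) sums bound_minus_id b M r"
proof -
  have "(\<lambda>n. coeff0 (extremal b M) n * (of_real r)^n) sums extremal b M (of_real r)"
    using sums_coeff0[OF extremal_holomorphic, of "of_real r"] assms by simp
  then have "(\<lambda>n. of_real (extremal_coeff b M n * r^n)) sums (of_real (r - bound_minus_id b M r) :: complex)"
    using assms by (simp add: coeff0_extremal extremal_of_real)
  then have "(\<lambda>n. extremal_coeff b M n * r^n) sums (r - bound_minus_id b M r)"
    by (simp only: sums_of_real_iff)
  from sums_diff[OF sums_single[of 1 "\<lambda>_. r"] this] show ?thesis by simp
qed

lemma sums_bound_zderiv_minus:
  assumes "0 \<le> r" "r < 1"
  shows "(\<lambda>n. - ((real n - 1) * extremal_coeff b M n * r^n)) sums bound_zderiv_minus b M r"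
proof -
  have "(\<lambda>n. (of_nat n - 1) * coeff0 (extremal b M) n * (of_real r)^n) sums
          (of_real r * deriv (extremal b M) (of_real r) - extremal b M (of_real r))"
    using sums_coeff0_zderiv_minus[OF extremal_holomorphic, of "of_real r"] assms by simp
  then have "(\<lambda>n. of_real ((real n - 1) * extremal_coeff b M n * r^n)) sums
          (of_real (- bound_zderiv_minus b M r) :: complex)"
    using assms by (simp add: coeff0_extremal extremal_zderiv_minus_of_real)
  then have "(\<lambda>n. (real n - 1) * extremal_coeff b M n * r^n) sums (- bound_zderiv_minus b M r)"
    by (simp only: sums_of_real_iff)
  from sums_minus[OF this] show ?thesis by simp
qed

lemma norm_minus_id_le:
  assumes f: "f \<in> coeff_bounded_class b M" and z: "norm z < 1"
  shows "cmod (f z - z) \<le> bound_minus_id b M (norm z)"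
proof (rule norm_sums_le)
  note F = coeff_bounded_classD[OF f]
  show "(\<lambda>n. coeff0 f n * z^n - (if n = 1 then z else 0)) sums (f z - z)"
    using sums_diff[OF sums_coeff0[OF F(1) z] sums_single[of 1 "\<lambda>_. z"]] by simp
  show "(\<lambda>n. (if n = 1 then norm z else 0) - extremal_coeff b M n * norm z^n)
      sums bound_minus_id b M (norm z)"
    using sums_bound_minus_id z by simp
  fix n :: nat
  consider "n \<le> 2" | "n \<ge> 3" by linarith
  then show "cmod (coeff0 f n * z^n - (if n = 1 then z else 0))
      \<le> (if n = 1 then norm z else 0) - extremal_coeff b M n * norm z^n"
  proof cases
    case 1
    then consider "n = 0" | "n = 1" | "n = 2" by linarith
    then show ?thesis by cases (use F in \<open>auto simp: extremal_coeff_def norm_mult norm_power\<close>)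
  next
    case 2
    then have "cmod (coeff0 f n) * norm z ^ n \<le> M * norm z ^ n"
      using F(5) by (intro mult_right_mono) auto
    then show ?thesis using 2 by (simp add: extremal_coeff_def norm_mult norm_power)
  qed
qed

lemma norm_zderiv_minus_le:
  assumes f: "f \<in> coeff_bounded_class b M" and z: "norm z < 1"
  shows "cmod (z * deriv f z - f z) \<le> bound_zderiv_minus b M (norm z)"
proof (rule norm_sums_le)
  note F = coeff_bounded_classD[OF f]
  show "(\<lambda>n. (of_nat n - 1) * coeff0 f n * z^n) sums (z * deriv f z - f z)"
    using sums_coeff0_zderiv_minus[OF F(1) z] .
  show "(\<lambda>n. - ((real n - 1) * extremal_coeff b M n * norm z^n)) sums bound_zderiv_minus b M (norm z)"
    using sums_bound_zderiv_minus z by simp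
  fix n :: nat
  consider "n \<le> 2" | "n \<ge> 3" by linarith
  then show "cmod ((of_nat n - 1) * coeff0 f n * z^n) \<le> - ((real n - 1) * extremal_coeff b M n * norm z^n)"
  proof cases
    case 1
    then consider "n = 0" | "n = 1" | "n = 2" by linarith
    then show ?thesis by cases (use F in \<open>auto simp: extremal_coeff_def norm_mult norm_power\<close>)
  next
    case 2
    then have "cmod (of_nat n - 1 :: complex) = real n - 1"
      by (metis norm_of_nat of_nat_1 of_nat_diff le_trans one_le_numeral)
    moreover have "(real n - 1) * (cmod (coeff0 f n) * norm z ^ n) \<le> (real n - 1) * (M * norm z ^ n)"
      using F(5) 2 by (intro mult_left_mono mult_right_mono) auto
    ultimately show ?thesis using 2 by (simp add: extremal_coeff_def norm_mult norm_power)
  qed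
qed

lemma norm_sq_minus_one_le:
  assumes f: "f \<in> coeff_bounded_class b M" and z: "z \<noteq> 0" "norm z < 1"
    and D: "bound_minus_id b M (norm z) < norm z"
  shows "f z \<noteq> 0"
    "cmod (sq f z - 1) \<le> bound_zderiv_minus b M (norm z) / (norm z - bound_minus_id b M (norm z))"
proof -
  have "norm z - bound_minus_id b M (norm z) \<le> cmod (f z)"
    using norm_minus_id_le[OF f z(2)] norm_triangle_ineq2[of z "f z"] by (simp add: norm_minus_commute)
  with D show "f z \<noteq> 0" by auto
  then have eq: "sq f z - 1 = (z * deriv f z - f z) / f z"
    using z(1) by (simp add: sq_def diff_divide_distrib)
  show "cmod (sq f z - 1) \<le> bound_zderiv_minus b M (norm z) / (norm z - bound_minus_id b M (norm z))"
    unfolding eq norm_divide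
    using norm_zderiv_minus_le[OF f z(2)] \<open>_ \<le> cmod (f z)\<close> D
    by (intro frac_le order_trans[OF norm_ge_zero]) auto
qed

subsection \<open>The radius equation\<close>

definition radius_poly :: "real \<Rightarrow> real \<Rightarrow> real \<Rightarrow> real \<Rightarrow> real" where
  "radius_poly \<alpha> b M r =
     ((1 + M) * (1 - \<alpha>) - (2 - \<alpha>) * (2 * b - M) * r) * (1 - r)^2 - M * (1 - \<alpha> + \<alpha> * r)"

lemma radius_poly_identity:
  assumes "r < 1"
  shows "(1 - \<alpha>) * (r - bound_minus_id b M r) - bound_zderiv_minus b M r
       = r * radius_poly \<alpha> b M r / (1 - r)^2"
proof -
  have "1 - r \<noteq> 0" using assms by simp
  then show ?thesis unfolding bound_minus_id_def bound_zderiv_minus_def radius_poly_def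
    by (simp add: field_simps) (simp add: algebra_simps power2_eq_square power3_eq_cube power4_eq_xxxx)
qed

text \<open>Write \<open>g = A(r) (1-r)\<^sup>2 - M q(r)\<close>: \<open>A\<close> is decreasing, and \<open>q\<close> is increasing on \<open>[0,1]\<close>,
  so \<open>g\<close> decreases strictly once \<open>g \<ge> 0\<close> forces \<open>A > 0\<close>.\<close>

lemma radius_poly_gt:
  assumes b: "0 \<le> b" and M: "M > 0" and \<alpha>: "0 \<le> \<alpha>" "\<alpha> < 1"
    and r: "0 < r" "r < s" "s < 1" and nonneg: "radius_poly \<alpha> b M s \<ge> 0"
  shows "radius_poly \<alpha> b M r > radius_poly \<alpha> b M s"
proof -
  define A where "A x = (1 - \<alpha>) - 2 * b * (2 - \<alpha>) * x" for x
  define q where "q x = x^2 * (3 - \<alpha> - (2 - \<alpha>) * x)" for x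
  have split: "radius_poly \<alpha> b M x = A x * (1 - x)^2 - M * q x" for x
    unfolding radius_poly_def A_def q_def by (simp add: algebra_simps power2_eq_square)
  have "(2 - \<alpha>) * s < 2 - \<alpha>"
    using r \<alpha> mult_strict_left_mono[of s 1 "2 - \<alpha>"] by simp
  then have "q s > 0"
    unfolding q_def using r by simp
  with M nonneg have "A s * (1 - s)^2 > 0"
    using split[of s] by (smt (verit) mult_pos_pos)
  then have "A s > 0" by (simp add: zero_less_mult_iff)
  moreover have "A r \<ge> A s"
    unfolding A_def using b \<alpha> r by (simp add: mult_left_mono)
  moreover have "(1 - r)^2 > (1 - s)^2" using r by (intro power_strict_mono) auto
  ultimately have A: "A s * (1 - s)^2 < A r * (1 - r)^2"
    by (smt (verit) mult_right_mono mult_strict_left_mono zero_le_power2)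
  have "s * r < r"
    using r mult_strict_right_mono[of s 1 r] by simp
  then have "s * r \<le> (s + r) / 2" using r by argo
  moreover have "r\<^sup>2 \<le> r" "s\<^sup>2 \<le> s"
    using r by (simp_all add: power2_eq_square mult_le_cancel_left1)
  ultimately have "(2 - \<alpha>) * (s\<^sup>2 + s * r + r\<^sup>2) \<le> (2 - \<alpha>) * (3/2 * (s + r))"
    using \<alpha> by (intro mult_left_mono) auto
  moreover have "0 \<le> \<alpha> * (s + r)" using \<alpha> r by simp
  ultimately have "0 \<le> (3 - \<alpha>) * (s + r) - (2 - \<alpha>) * (s\<^sup>2 + s * r + r\<^sup>2)"
    by (simp add: algebra_simps)
  then have "0 \<le> (s - r) * ((3 - \<alpha>) * (s + r) - (2 - \<alpha>) * (s\<^sup>2 + s * r + r\<^sup>2))"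
    using r by simp
  also have "\<dots> = q s - q r"
    unfolding q_def by (simp add: algebra_simps power2_eq_square power3_eq_cube)
  finally have "M * q r \<le> M * q s" using M by simp
  with A show ?thesis using split[of r] split[of s] by linarith
qed

lemma Re_ge_one_minus_norm: "Re w \<ge> 1 - cmod (w - 1)"
  using abs_Re_le_cmod[of "w - 1"] by simp

locale radius_root =
  fixes b M \<alpha> r0 :: real
  assumes b_nonneg: "0 \<le> b" and M_pos: "M > 0" and \<alpha>: "0 \<le> \<alpha>" "\<alpha> < 1"
    and r0: "0 < r0" "r0 < 1" and root: "radius_poly \<alpha> b M r0 = 0"
begin

lemma bounds_within_radius:
  assumes r: "0 < r" "r \<le> r0"
  shows "bound_minus_id b M r < r"
    "bound_zderiv_minus b M r / (r - bound_minus_id b M r) \<le> 1 - \<alpha>"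
    "r < r0 \<Longrightarrow> bound_zderiv_minus b M r / (r - bound_minus_id b M r) < 1 - \<alpha>"
proof -
  have r1: "r < 1" using r r0 by linarith
  have g: "radius_poly \<alpha> b M r \<ge> 0" and g_strict: "r < r0 \<Longrightarrow> radius_poly \<alpha> b M r > 0"
    using radius_poly_gt[OF b_nonneg M_pos \<alpha> r(1) _ r0(2)] root r by (cases "r = r0"; force)+
  have N: "bound_zderiv_minus b M r > 0"
    unfolding bound_zderiv_minus_def using b_nonneg M_pos r r1
    by (intro add_nonneg_pos) auto
  have id: "(1 - \<alpha>) * (r - bound_minus_id b M r) - bound_zderiv_minus b M r
      = r * radius_poly \<alpha> b M r / (1 - r)^2"
    using radius_poly_identity[OF r1] .
  then have le: "bound_zderiv_minus b M r \<le> (1 - \<alpha>) * (r - bound_minus_id b M r)"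
    using g r by (smt (verit) divide_nonneg_nonneg mult_nonneg_nonneg zero_le_power2)
  with N \<alpha> show D: "bound_minus_id b M r < r"
    by (smt (verit) mult_nonneg_nonpos)
  from le show "bound_zderiv_minus b M r / (r - bound_minus_id b M r) \<le> 1 - \<alpha>"
    using D by (simp add: pos_divide_le_eq)
  assume "r < r0"
  then have "bound_zderiv_minus b M r < (1 - \<alpha>) * (r - bound_minus_id b M r)"
    using id g_strict r r1 by (smt (verit) divide_pos_pos mult_pos_pos zero_less_power)
  then show "bound_zderiv_minus b M r / (r - bound_minus_id b M r) < 1 - \<alpha>"
    using D by (simp add: pos_divide_less_eq)
qed

lemma sq_within_radius:
  assumes f: "f \<in> coeff_bounded_class b M" and z: "cmod z \<le> r0"
  shows "z \<noteq> 0 \<Longrightarrow> f z \<noteq> 0"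
    "cmod (sq f z - 1) \<le> 1 - \<alpha>"
    "cmod z < r0 \<Longrightarrow> cmod (sq f z - 1) < 1 - \<alpha>"
proof -
  have z1: "cmod z < 1" using z r0 by linarith
  show "z \<noteq> 0 \<Longrightarrow> f z \<noteq> 0"
    using norm_sq_minus_one_le(1)[OF f _ z1] bounds_within_radius(1)[OF _ z] by simp
  have "cmod (sq f z - 1) \<le> 1 - \<alpha> \<and> (cmod z < r0 \<longrightarrow> cmod (sq f z - 1) < 1 - \<alpha>)"
  proof (cases "z = 0")
    case True
    then show ?thesis using \<alpha> by (simp add: sq_def)
  next
    case False
    then have "0 < cmod z" by simp
    note B = bounds_within_radius[OF this z] and E = norm_sq_minus_one_le(2)[OF f False z1 B(1)]
    show ?thesis using B(2,3) E by auto
  qed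
  then show "cmod (sq f z - 1) \<le> 1 - \<alpha>" "cmod z < r0 \<Longrightarrow> cmod (sq f z - 1) < 1 - \<alpha>"
    by auto
qed

lemma sq_extremal_at_radius: "sq (extremal b M) (of_real r0) = of_real \<alpha>"
proof -
  define D N where "D = r0 - bound_minus_id b M r0" and "N = bound_zderiv_minus b M r0"
  have "D > 0" using bounds_within_radius(1)[OF r0(1) order_refl] by (simp add: D_def)
  have "N = (1 - \<alpha>) * D"
    using radius_poly_identity[OF r0(2), of \<alpha> b M] root by (simp add: D_def N_def)
  have "sq (extremal b M) (of_real r0)
      = 1 + (of_real r0 * deriv (extremal b M) (of_real r0) - extremal b M (of_real r0))
            / extremal b M (of_real r0)"
    using r0 \<open>D > 0\<close> by (simp add: sq_def extremal_of_real D_def field_simps)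
  also have "\<dots> = 1 - of_real N / of_real D"
    by (simp only: extremal_zderiv_minus_of_real[OF r0(2)]) (simp add: extremal_of_real[OF r0(2)] D_def N_def)
  finally show ?thesis using \<open>D > 0\<close> \<open>N = (1 - \<alpha>) * D\<close> by simp
qed

lemma extremal_not_beyond_radius:
  assumes "\<And>z. cmod z < r \<Longrightarrow> P (sq (extremal b M) z)" "\<not> P (of_real \<alpha>)"
  shows "r \<le> r0"
proof (rule ccontr)
  assume "\<not> r \<le> r0"
  then have "P (sq (extremal b M) (of_real r0))" using assms(1) r0 by simp
  with assms(2) show False by (simp add: sq_extremal_at_radius)
qed

lemma radius_starlike_order_eq: "radius_starlike_order \<alpha> (coeff_bounded_class b M) = r0"
  unfolding radius_starlike_order_def
proof (rule cSup_eq_maximum)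
  have "\<alpha> < Re (sq f z)" if "f \<in> coeff_bounded_class b M" "cmod z < r0" for f z
    using sq_within_radius(3)[OF that(1) less_imp_le that(2)] that(2) Re_ge_one_minus_norm[of "sq f z"]
    by linarith
  then show "r0 \<in> {r \<in> {0<..1}. \<forall>f\<in>coeff_bounded_class b M.
      (\<forall>z. 0 < cmod z \<and> cmod z < r \<longrightarrow> f z \<noteq> 0) \<and> (\<forall>z. cmod z < r \<longrightarrow> \<alpha> < Re (sq f z))}"
    using r0 sq_within_radius(1) by auto
  fix r assume "r \<in> {r \<in> {0<..1}. \<forall>f\<in>coeff_bounded_class b M.
      (\<forall>z. 0 < cmod z \<and> cmod z < r \<longrightarrow> f z \<noteq> 0) \<and> (\<forall>z. cmod z < r \<longrightarrow> \<alpha> < Re (sq f z))}"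
  then show "r \<le> r0"
    using extremal_in_class[OF b_nonneg less_imp_le[OF M_pos]]
    by (intro extremal_not_beyond_radius[where P = "\<lambda>w. \<alpha> < Re w"]) auto
qed

end

lemma radius_parabolic_eq:
  assumes "radius_root b M (1/2) r"
  shows "radius_parabolic (coeff_bounded_class b M) = r"
proof -
  interpret radius_root b M "1/2" r by fact
  have "cmod (sq f z - 1) < Re (sq f z)" if "f \<in> coeff_bounded_class b M" "cmod z < r" for f z
    using sq_within_radius(3)[OF that(1) less_imp_le that(2)] that(2) Re_ge_one_minus_norm[of "sq f z"]
    by linarith
  then show ?thesis
    unfolding radius_parabolic_def
  proof (intro cSup_eq_maximum)
    fix s assume "s \<in> {s \<in> {0<..1}. \<forall>f\<in>coeff_bounded_class b M.
        \<forall>z. cmod z < s \<longrightarrow> cmod (sq f z - 1) < Re (sq f z)}"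
    then show "s \<le> r"
      using extremal_in_class[OF b_nonneg less_imp_le[OF M_pos]]
      by (intro extremal_not_beyond_radius[where P = "\<lambda>w. cmod (w - 1) < Re w"]) auto
  qed (use r0 in auto)
qed

theorem theorem2p5:
  fixes b M \<alpha> r0 :: real and F :: "(complex \<Rightarrow> complex) set"
  assumes b: "0 \<le> b" "b \<le> 1" and M: "M > 0" and \<alpha>: "0 \<le> \<alpha>" "\<alpha> < 1"
    and r0: "0 < r0" "r0 < 1"
    and r0_eq: "M * (1 - \<alpha> + \<alpha> * r0) =
                 ((1 + M) * (1 - \<alpha>) - (2 - \<alpha>) * (2 * b - M) * r0) * (1 - r0)^2"
    and F_def: "F = {f \<in> class_A b. \<forall>n\<ge>3. cmod (coeff0 f n) \<le> M}"
  shows "(\<forall>f\<in>F. \<forall>z. cmod z \<le> r0 \<longrightarrow> cmod (sq f z - 1) \<le> 1 - \<alpha>)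
       \<and> radius_starlike_order \<alpha> F = r0
       \<and> (\<forall>r. 0 < r \<and> r < 1 \<and>
             M * (1 - 1/2 + 1/2 * r) =
               ((1 + M) * (1 - 1/2) - (2 - 1/2) * (2 * b - M) * r) * (1 - r)^2
             \<longrightarrow> radius_parabolic F = r)
       \<and> (let f0 = (\<lambda>z::complex. z - 2 * of_real b * z^2 - of_real M * z^3 / (1 - z)) in
            f0 \<in> F \<and> cmod (sq f0 (of_real r0) - 1) = 1 - \<alpha> \<and> Re (sq f0 (of_real r0)) = \<alpha>)"
proof -
  have root: "radius_poly \<alpha> b M r0 = 0"
    using r0_eq unfolding radius_poly_def by linarith
  interpret radius_root b M \<alpha> r0
    using b M \<alpha> r0 root by unfold_locales
  have F: "F = coeff_bounded_class b M" by (simp add: F_def coeff_bounded_class_def)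
  have parabolic: "radius_parabolic F = r"
    if "0 < r" "r < 1" "M * (1 - 1/2 + 1/2 * r) =
        ((1 + M) * (1 - 1/2) - (2 - 1/2) * (2 * b - M) * r) * (1 - r)^2" for r
  proof -
    have "radius_poly (1/2) b M r = 0"
      using that(3) unfolding radius_poly_def by linarith
    with that b M show ?thesis unfolding F by (intro radius_parabolic_eq, unfold_locales) auto
  qed
  have f0: "(\<lambda>z. z - 2 * of_real b * z^2 - of_real M * z^3 / (1 - z)) = extremal b M"
    by (simp add: fun_eq_iff extremal_def)
  have "cmod (of_real \<alpha> - 1 :: complex) = \<bar>\<alpha> - 1\<bar>"
    by (metis norm_of_real of_real_1 of_real_diff)
  then have sharp: "let f0 = extremal b M in
      f0 \<in> F \<and> cmod (sq f0 (of_real r0) - 1) = 1 - \<alpha> \<and> Re (sq f0 (of_real r0)) = \<alpha>"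
    using extremal_in_class[OF b(1) less_imp_le[OF M]] using \<alpha> by (simp add: F sq_extremal_at_radius)
  show ?thesis
    unfolding f0 using sq_within_radius(2) radius_starlike_order_eq parabolic sharp
    by (simp add: F)
qed

end
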